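(* Let $\mathcal{X}$ be a set of feasible solutions and $f_1,\dots,f_m:\mathcal{X}\to\mathbb{R}$. Fix $K\ge1$, a preference vector $\boldsymbol{\lambda}$ with $\lambda_i\ge0$, $\sum_i\lambda_i=1$, and $\boldsymbol{z}^*\in\mathbb{R}^m$. For $X_K=\{\boldsymbol{x}^{(1)},\dots,\boldsymbol{x}^{(K)}\}\subseteq\mathcal{X}$ let $$g^{(\mathrm{TCH\text{-}Set})}(X_K\mid\boldsymbol{\lambda})=\max_{1\le i\le m}\Big\{\lambda_i\Big(\min_{1\le k\le K}f_i(\boldsymbol{x}^{(k)})-z_i^*\Big)\Big\},$$ and for $\mu>0$, $\mu_1,\dots,\mu_m>0$ let $$g^{(\mathrm{STCH\text{-}Set})}_{\mu,\{\mu_i\}}(X_K\mid\boldsymbol{\lambda})=\mu\log\left(\sum_{i=1}^m\exp\left(\frac{\lambda_i\left(-\mu_i\log\left(\sum_{k=1}^K e^{-f_i(\boldsymbol{x}^{(k)})/\mu_i}\right)-z_i^*\right)}{\mu}\right)\right).$$ Then $g^{(\mathrm{STCH\text{-}Set})}_{\mu,\{\mu_i\}}(\cdot\mid\boldsymbol{\lambda})$ is a uniform smooth approximation of $g^{(\mathrm{TCH\text{-}Set})}(\cdot\mid\boldsymbol{\lambda})$: for every set $X_K$ of $K$ solutions in $\mathcal{X}$, $$\lim_{\mu\downarrow0,\ \mu_i\downarrow0\ \forall i}g^{(\mathrm{STCH\text{-}Set})}_{\mu,\{\mu_i\}}(X_K\mid\boldsymbol{\lambda})=g^{(\mathrm{TCH\text{-}Set})}(X_K\mid\boldsymbol{\lambda}),$$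 with the convergence uniform over all such sets $X_K$. *)

theory Defs
  imports Complex_Main
begin

text \<open>Objectives are indexed 0..m-1, solutions of a set X_K are x 0, ..., x (K-1).\<close>

definition tch_set ::
  "nat \<Rightarrow> nat \<Rightarrow> (nat \<Rightarrow> 'x \<Rightarrow> real) \<Rightarrow> (nat \<Rightarrow> real) \<Rightarrow> (nat \<Rightarrow> real) \<Rightarrow> (nat \<Rightarrow> 'x) \<Rightarrow> real"
  where "tch_set m K f lam z x =
    Max ((\<lambda>i. lam i * (Min ((\<lambda>k. f i (x k)) ` {..<K}) - z i)) ` {..<m})"

definition stch_set ::
  "nat \<Rightarrow> nat \<Rightarrow> (nat \<Rightarrow> 'x \<Rightarrow> real) \<Rightarrow> (nat \<Rightarrow> real) \<Rightarrow> (nat \<Rightarrow> real)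
     \<Rightarrow> real \<Rightarrow> (nat \<Rightarrow> real) \<Rightarrow> (nat \<Rightarrow> 'x) \<Rightarrow> real"
  where "stch_set m K f lam z mu mus x =
    mu * ln (\<Sum>i<m. exp (lam i * (- mus i * ln (\<Sum>k<K. exp (- f i (x k) / mus i)) - z i) / mu))"

end

theory Submission
  imports Defs
begin

text \<open>
  The scaled log-sum-exp \<open>\<mu> ln \<Sum>\<^sub>i exp (b\<^sub>i / \<mu>)\<close> lies between \<open>max\<^sub>i b\<^sub>i\<close> and
  \<open>max\<^sub>i b\<^sub>i + \<mu> ln n\<close> for \<open>n\<close> terms, and dually for the smooth minimum. Applying this
  once to the inner minima over the \<open>K\<close> solutions and once to the outer maximum over the
  \<open>m\<close> objectives, and using \<open>0 \<le> \<lambda>\<^sub>i \<le> 1\<close>, the two functions differ by at most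
  \<open>max\<^sub>i \<mu>\<^sub>i ln K + \<mu> ln m\<close>, a bound that does not depend on the solutions at all.
\<close>

definition smooth_max :: "real \<Rightarrow> 'a set \<Rightarrow> ('a \<Rightarrow> real) \<Rightarrow> real"
  where "smooth_max mu A b = mu * ln (\<Sum>i\<in>A. exp (b i / mu))"

definition smooth_min :: "real \<Rightarrow> 'a set \<Rightarrow> ('a \<Rightarrow> real) \<Rightarrow> real"
  where "smooth_min mu A a = - smooth_max mu A (\<lambda>i. - a i)"

lemma Max_le_smooth_max:
  fixes b :: "'a \<Rightarrow> real"
  assumes "finite A" "A \<noteq> {}" "mu > 0"
  shows "Max (b ` A) \<le> smooth_max mu A b"
proof -
  have "Max (b ` A) \<in> b ` A"
    using assms by simp
  then obtain j where j: "j \<in> A" "b j = Max (b ` A)"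
    by auto
  have "exp (Max (b ` A) / mu) \<le> (\<Sum>i\<in>A. exp (b i / mu))"
    using j assms(1) by (metis exp_ge_zero member_le_sum)
  then have "Max (b ` A) / mu \<le> ln (\<Sum>i\<in>A. exp (b i / mu))"
    using assms by (simp add: ln_ge_iff sum_pos)
  then show ?thesis
    using assms(3) by (simp add: smooth_max_def pos_divide_le_eq mult.commute)
qed

lemma smooth_max_le_Max:
  fixes b :: "'a \<Rightarrow> real"
  assumes "finite A" "A \<noteq> {}" "mu > 0"
  shows "smooth_max mu A b \<le> Max (b ` A) + mu * ln (card A)"
proof -
  let ?M = "Max (b ` A)"
  have card_pos: "real (card A) > 0"
    using assms by (simp add: card_gt_0_iff)
  have "(\<Sum>i\<in>A. exp (b i / mu)) \<le> (\<Sum>i\<in>A. exp (?M / mu))"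
    using assms by (intro sum_mono) (simp add: divide_right_mono)
  also have "\<dots> = real (card A) * exp (?M / mu)"
    by simp
  finally have "ln (\<Sum>i\<in>A. exp (b i / mu)) \<le> ln (real (card A) * exp (?M / mu))"
    using assms card_pos by (simp add: sum_pos)
  also have "\<dots> = ln (card A) + ?M / mu"
    using card_pos by (simp add: ln_mult)
  finally have "ln (\<Sum>i\<in>A. exp (b i / mu)) \<le> ln (card A) + ?M / mu" .
  then have "smooth_max mu A b \<le> mu * (ln (card A) + ?M / mu)"
    using assms(3) unfolding smooth_max_def by (intro mult_left_mono) auto
  also have "\<dots> = ?M + mu * ln (card A)"
    using assms(3) by (simp add: field_simps)
  finally show ?thesis .
qed

lemma abs_smooth_max_minus_Max_le:
  fixes b :: "'a \<Rightarrow> real"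
  assumes "finite A" "A \<noteq> {}" "mu > 0"
  shows "\<bar>smooth_max mu A b - Max (b ` A)\<bar> \<le> mu * ln (card A)"
  using Max_le_smooth_max[OF assms, of b] smooth_max_le_Max[OF assms, of b]
  unfolding abs_le_iff by linarith

lemma abs_smooth_min_minus_Min_le:
  fixes a :: "'a \<Rightarrow> real"
  assumes "finite A" "A \<noteq> {}" "mu > 0"
  shows "\<bar>smooth_min mu A a - Min (a ` A)\<bar> \<le> mu * ln (card A)"
proof -
  have "- Min (a ` A) = Max ((\<lambda>i. - a i) ` A)"
    using assms by (simp add: image_image)
  then have "smooth_min mu A a - Min (a ` A) = - (smooth_max mu A (\<lambda>i. - a i) - Max ((\<lambda>i. - a i) ` A))"
    by (simp add: smooth_min_def)
  then show ?thesis
    using abs_smooth_max_minus_Max_le[OF assms, of "\<lambda>i. - a i"] by simp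
qed

lemma abs_Max_image_diff_le:
  fixes b c :: "'a \<Rightarrow> real"
  assumes "finite A" "A \<noteq> {}" and close: "\<And>i. i \<in> A \<Longrightarrow> \<bar>b i - c i\<bar> \<le> d"
  shows "\<bar>Max (b ` A) - Max (c ` A)\<bar> \<le> d"
proof -
  have "Max (b ` A) \<in> b ` A"
    using assms by simp
  then obtain j where j: "j \<in> A" "b j = Max (b ` A)"
    by auto
  have "Max (c ` A) \<in> c ` A"
    using assms by simp
  then obtain l where l: "l \<in> A" "c l = Max (c ` A)"
    by auto
  have "c j \<le> Max (c ` A)" "b l \<le> Max (b ` A)"
    using assms(1) j(1) l(1) by auto
  then show ?thesis
    using close[OF j(1)] close[OF l(1)] j l by auto
qed

lemma stch_set_eq_smooth_max:
  "stch_set m K f lam z mu mus x =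
     smooth_max mu {..<m} (\<lambda>i. lam i * (smooth_min (mus i) {..<K} (\<lambda>k. f i (x k)) - z i))"
  by (simp add: stch_set_def smooth_min_def smooth_max_def)

lemma abs_stch_set_minus_tch_set_le:
  assumes "m \<ge> 1" "K \<ge> 1"
    and lam: "\<And>i. i < m \<Longrightarrow> 0 \<le> lam i \<and> lam i \<le> 1"
    and "mu > 0" and mus: "\<And>i. i < m \<Longrightarrow> 0 < mus i \<and> mus i \<le> r"
  shows "\<bar>stch_set m K f lam z mu mus x - tch_set m K f lam z x\<bar> \<le> r * ln K + mu * ln m"
proof -
  define b where "b i = lam i * (smooth_min (mus i) {..<K} (\<lambda>k. f i (x k)) - z i)" for i
  define c where "c i = lam i * (Min ((\<lambda>k. f i (x k)) ` {..<K}) - z i)" for i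
  have objectives: "{..<m} \<noteq> {}" and solutions: "{..<K} \<noteq> {}"
    using assms(1,2) by (auto simp: lessThan_empty_iff)
  have "\<bar>b i - c i\<bar> \<le> r * ln K" if "i < m" for i
  proof -
    have "\<bar>b i - c i\<bar> = lam i * \<bar>smooth_min (mus i) {..<K} (\<lambda>k. f i (x k)) - Min ((\<lambda>k. f i (x k)) ` {..<K})\<bar>"
      using lam[OF that] by (simp add: b_def c_def abs_mult flip: right_diff_distrib)
    also have "\<dots> \<le> 1 * (mus i * ln K)"
      using abs_smooth_min_minus_Min_le[OF _ solutions, of "mus i" "\<lambda>k. f i (x k)"] lam[OF that] mus[OF that]
      by (intro mult_mono) auto
    also have "\<dots> \<le> r * ln K"
      using mus[OF that] assms(2) by (simp add: mult_right_mono)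
    finally show ?thesis .
  qed
  then have "\<bar>Max (b ` {..<m}) - tch_set m K f lam z x\<bar> \<le> r * ln K"
    unfolding tch_set_def c_def[symmetric] by (intro abs_Max_image_diff_le) (use objectives in auto)
  moreover have "\<bar>stch_set m K f lam z mu mus x - Max (b ` {..<m})\<bar> \<le> mu * ln m"
    using abs_smooth_max_minus_Max_le[OF _ objectives \<open>mu > 0\<close>, of b]
    by (simp add: stch_set_eq_smooth_max b_def[abs_def])
  ultimately show ?thesis
    by linarith
qed

theorem theorem3:
  fixes Xs :: "'x set" and f :: "nat \<Rightarrow> 'x \<Rightarrow> real"
    and lam z :: "nat \<Rightarrow> real" and m K :: nat
  assumes "m \<ge> 1" and "K \<ge> 1"
    and "\<And>i. i < m \<Longrightarrow> lam i \<ge> 0"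
    and "(\<Sum>i<m. lam i) = 1"
  shows "\<forall>\<epsilon>>0. \<exists>\<delta>>0. \<forall>mu mus. 0 < mu \<and> mu < \<delta> \<and> (\<forall>i<m. 0 < mus i \<and> mus i < \<delta>) \<longrightarrow>
           (\<forall>x. (\<forall>k<K. x k \<in> Xs) \<and> inj_on x {..<K} \<longrightarrow>
              \<bar>stch_set m K f lam z mu mus x - tch_set m K f lam z x\<bar> < \<epsilon>)"
proof (intro allI impI)
  fix \<epsilon> :: real
  assume "\<epsilon> > 0"
  define C where "C = ln (real K) + ln (real m) + 1"
  have "C > 0"
    using assms(1,2) by (simp add: C_def add_nonneg_pos)
  have lam: "0 \<le> lam i \<and> lam i \<le> 1" if "i < m" for i
    using assms(3,4) member_le_sum[of i "{..<m}" lam] that by auto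
  show "\<exists>\<delta>>0. \<forall>mu mus. 0 < mu \<and> mu < \<delta> \<and> (\<forall>i<m. 0 < mus i \<and> mus i < \<delta>) \<longrightarrow>
           (\<forall>x. (\<forall>k<K. x k \<in> Xs) \<and> inj_on x {..<K} \<longrightarrow>
              \<bar>stch_set m K f lam z mu mus x - tch_set m K f lam z x\<bar> < \<epsilon>)"
  proof (intro exI[of _ "\<epsilon> / C"] conjI allI impI)
    show "\<epsilon> / C > 0"
      using \<open>\<epsilon> > 0\<close> \<open>C > 0\<close> by simp
    fix mu mus x
    assume small: "0 < mu \<and> mu < \<epsilon> / C \<and> (\<forall>i<m. 0 < mus i \<and> mus i < \<epsilon> / C)"
    have "\<bar>stch_set m K f lam z mu mus x - tch_set m K f lam z x\<bar> \<le> \<epsilon> / C * ln K + mu * ln m"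
      using small by (intro abs_stch_set_minus_tch_set_le assms(1,2) lam) auto
    also have "\<dots> \<le> \<epsilon> / C * ln K + \<epsilon> / C * ln m"
      using small assms(1) by (intro add_left_mono mult_right_mono) auto
    also have "\<dots> < \<epsilon> / C * C"
      using \<open>\<epsilon> > 0\<close> \<open>C > 0\<close>
      unfolding distrib_left[symmetric] by (intro mult_strict_left_mono) (auto simp: C_def)
    finally show "\<bar>stch_set m K f lam z mu mus x - tch_set m K f lam z x\<bar> < \<epsilon>"
      using \<open>C > 0\<close> by simp
  qed
qed

end
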